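(* Let $X$ be a metric space with bounded geometry. Then the normalisers of $\ell^\infty(X)$ in $C^*_u(X)$ and in $C^*_{uq}(X)$ coincide. More precisely, for $T\in\mathfrak B(\ell^2(X))$ the following are equivalent: (1) $T$ belongs to the normaliser of $\ell^\infty(X)$ in $C^*_u(X)$; (2) $T$ belongs to the normaliser of $\ell^\infty(X)$ in $C^*_{uq}(X)$; (3) $T=fV^\theta$ for some $f\in\ell^\infty(X)$ and some bijection $\theta:D\to R$ between subsets $D,R\subseteq X$ such that for every $\varepsilon>0$ there exists $K>0$ with $|f(x)|<\varepsilon$ for all $x\in D$ with $d(x,\theta(x))>K$.
   Context: Bounded geometry: $\sup_x|B(x,r)|<\infty$ for all $r>0$. $C^*_u(X)$ is the norm closure of finite propagation operators on $\ell^2(X)$; $C^*_{uq}(X)$ is the $C^*$-algebra of quasi-local operators ($T$ such that for each $\varepsilon>0$ there is $r>0$ with $\|\chi_AT\chi_B\|\leq\varepsilon$ whenever $d(A,B)\geq r$). $\ell^\infty(X)$ acts by multiplication. For a bijection $\theta:D\to R$, $V^\theta$ is the operator with matrix entries $V^\theta_{x,y}=1$ if $x\in D$ and $y=\theta(x)$, and $0$ otherwise. The normaliser of $\mathcal B$ in $\mathcal A$ is $\{a\in\mathcal A: a\mathcal Ba^*\cup a^*\mathcal Ba\subseteq\mathcal B\}$. *)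

theory Defs
  imports "HOL-Analysis.Analysis"
begin

text \<open>The metric space X is the universe of a type 'a :: metric_space.\<close>

definition bounded_geometry :: "'a::metric_space itself \<Rightarrow> bool" where
  "bounded_geometry _ \<longleftrightarrow>
     (\<forall>r>0. \<exists>N::nat. \<forall>x::'a. finite (cball x r) \<and> card (cball x r) \<le> N)"

definition ell2 :: "('a \<Rightarrow> complex) set" where
  "ell2 = {h. (\<lambda>x. (cmod (h x))\<^sup>2) summable_on UNIV}"

definition ell2_inner :: "('a \<Rightarrow> complex) \<Rightarrow> ('a \<Rightarrow> complex) \<Rightarrow> complex" where
  "ell2_inner g h = infsum (\<lambda>x. cnj (g x) * h x) UNIV"

definition ell2_norm :: "('a \<Rightarrow> complex) \<Rightarrow> real" where
  "ell2_norm h = sqrt (infsum (\<lambda>x. (cmod (h x))\<^sup>2) UNIV)"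

text \<open>Bounded operators on l2(X): complex-linear maps of l2(X) into itself with a
  norm bound; by convention they vanish outside l2(X), so equality of operators is
  equality of functions.\<close>

definition bounded_op :: "(('a \<Rightarrow> complex) \<Rightarrow> ('a \<Rightarrow> complex)) \<Rightarrow> bool" where
  "bounded_op T \<longleftrightarrow>
     (\<forall>h\<in>ell2. T h \<in> ell2) \<and>
     (\<forall>h. h \<notin> ell2 \<longrightarrow> T h = (\<lambda>x. 0)) \<and>
     (\<forall>g\<in>ell2. \<forall>h\<in>ell2. T (\<lambda>x. g x + h x) = (\<lambda>x. T g x + T h x)) \<and>
     (\<forall>c. \<forall>h\<in>ell2. T (\<lambda>x. c * h x) = (\<lambda>x. c * T h x)) \<and>
     (\<exists>C. \<forall>h\<in>ell2. ell2_norm (T h) \<le> C * ell2_norm h)"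

definition op_norm :: "(('a \<Rightarrow> complex) \<Rightarrow> ('a \<Rightarrow> complex)) \<Rightarrow> real" where
  "op_norm T = Sup {ell2_norm (T h) | h. h \<in> ell2 \<and> ell2_norm h \<le> 1}"

definition adj :: "(('a \<Rightarrow> complex) \<Rightarrow> ('a \<Rightarrow> complex)) \<Rightarrow> (('a \<Rightarrow> complex) \<Rightarrow> ('a \<Rightarrow> complex))" where
  "adj T = (SOME S. bounded_op S \<and>
              (\<forall>g\<in>ell2. \<forall>h\<in>ell2. ell2_inner (T g) h = ell2_inner g (S h)))"

definition mult_op :: "('a \<Rightarrow> complex) \<Rightarrow> (('a \<Rightarrow> complex) \<Rightarrow> ('a \<Rightarrow> complex))" where
  "mult_op f = (\<lambda>h. if h \<in> ell2 then (\<lambda>x. f x * h x) else (\<lambda>x. 0))"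

definition linf_ops :: "(('a \<Rightarrow> complex) \<Rightarrow> ('a \<Rightarrow> complex)) set" where
  "linf_ops = {mult_op f | f. bounded (range f)}"

definition chi :: "'a set \<Rightarrow> (('a \<Rightarrow> complex) \<Rightarrow> ('a \<Rightarrow> complex))" where
  "chi A = mult_op (indicator A)"

definition delta :: "'a \<Rightarrow> 'a \<Rightarrow> complex" where
  "delta y = (\<lambda>z. if z = y then 1 else 0)"

definition entry :: "(('a \<Rightarrow> complex) \<Rightarrow> ('a \<Rightarrow> complex)) \<Rightarrow> 'a \<Rightarrow> 'a \<Rightarrow> complex" where
  "entry T x y = T (delta y) x"

definition finite_propagation :: "(('a::metric_space \<Rightarrow> complex) \<Rightarrow> ('a \<Rightarrow> complex)) \<Rightarrow> bool" where
  "finite_propagation T \<longleftrightarrow> (\<exists>r. \<forall>x y. dist x y > r \<longrightarrow> entry T x y = 0)"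

definition uniform_roe :: "(('a::metric_space \<Rightarrow> complex) \<Rightarrow> ('a \<Rightarrow> complex)) set" where
  "uniform_roe = {T. bounded_op T \<and>
     (\<forall>\<epsilon>>0. \<exists>S. bounded_op S \<and> finite_propagation S \<and> op_norm (\<lambda>h x. T h x - S h x) \<le> \<epsilon>)}"

definition quasi_local :: "(('a::metric_space \<Rightarrow> complex) \<Rightarrow> ('a \<Rightarrow> complex)) set" where
  "quasi_local = {T. bounded_op T \<and>
     (\<forall>\<epsilon>>0. \<exists>r>0. \<forall>A B. setdist A B \<ge> r \<longrightarrow> op_norm (chi A \<circ> T \<circ> chi B) \<le> \<epsilon>)}"

definition normaliser ::
  "(('a \<Rightarrow> complex) \<Rightarrow> ('a \<Rightarrow> complex)) set \<Rightarrow> (('a \<Rightarrow> complex) \<Rightarrow> ('a \<Rightarrow> complex)) set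
     \<Rightarrow> (('a \<Rightarrow> complex) \<Rightarrow> ('a \<Rightarrow> complex)) set" where
  "normaliser \<B> \<A> = {a \<in> \<A>. \<forall>b\<in>\<B>. a \<circ> b \<circ> adj a \<in> \<B> \<and> adj a \<circ> b \<circ> a \<in> \<B>}"

definition partial_translation :: "('a \<Rightarrow> 'a) \<Rightarrow> 'a set \<Rightarrow> (('a \<Rightarrow> complex) \<Rightarrow> ('a \<Rightarrow> complex))" where
  "partial_translation \<theta> D = (\<lambda>h. if h \<in> ell2 then (\<lambda>x. if x \<in> D then h (\<theta> x) else 0) else (\<lambda>x. 0))"

end

theory Submission
  imports Defs
begin

text \<open>A normaliser \<open>T\<close> of the diagonal conjugates the projection onto each point into a diagonal
  operator; this forces every row and every column of the matrix of \<open>T\<close> to contain at most one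
  nonzero entry, so \<open>T\<close> is a weighted partial translation \<open>f V\<^sup>\<theta>\<close>. Quasi-locality, tested on
  pairs of single points, makes the weights decay along pairs \<open>(x, \<theta> x)\<close> that are far apart.
  Conversely, such a weighted translation is the norm limit of its truncations to bounded
  propagation, so it lies in the uniform Roe algebra, and conjugating a multiplication operator
  by it gives a multiplication operator. As the uniform Roe algebra is contained in the
  quasi-local algebra, all three conditions are equivalent.\<close>

section \<open>The Hilbert space of square-summable functions\<close>

abbreviation sqmod :: "('a \<Rightarrow> complex) \<Rightarrow> 'a \<Rightarrow> real" where
  "sqmod h \<equiv> (\<lambda>x. (cmod (h x))\<^sup>2)"

lemma ell2_summable: "h \<in> ell2 \<Longrightarrow> sqmod h summable_on UNIV"
  by (simp add: ell2_def)

lemma ell2_zero [simp]: "(\<lambda>x. 0) \<in> ell2"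
  by (simp add: ell2_def)

lemma ell2_dominated:
  assumes "h \<in> ell2" "\<And>x. cmod (k x) \<le> cmod (h x)"
  shows "k \<in> ell2"
proof -
  have "sqmod k summable_on UNIV"
    by (rule summable_on_comparison_test[OF ell2_summable[OF assms(1)]])
      (auto intro: power_mono assms(2))
  then show ?thesis by (simp add: ell2_def)
qed

lemma ell2_cmult:
  assumes "h \<in> ell2" shows "(\<lambda>x. c * h x) \<in> ell2"
proof -
  have "(\<lambda>x. (cmod c)\<^sup>2 * sqmod h x) summable_on UNIV"
    by (rule summable_on_cmult_right[OF ell2_summable[OF assms]])
  then show ?thesis by (simp add: ell2_def norm_mult power_mult_distrib)
qed

lemma ell2_add:
  assumes "g \<in> ell2" "h \<in> ell2" shows "(\<lambda>x. g x + h x) \<in> ell2"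
proof -
  have sq_add_le: "(cmod (a + b))\<^sup>2 \<le> 2 * (cmod a)\<^sup>2 + 2 * (cmod b)\<^sup>2" for a b :: complex
  proof -
    have "(cmod (a + b))\<^sup>2 \<le> (cmod a + cmod b)\<^sup>2"
      by (simp add: power_mono norm_triangle_ineq)
    then show ?thesis by (smt (verit) power2_sum sum_squares_bound)
  qed
  have "(\<lambda>x. 2 * sqmod g x + 2 * sqmod h x) summable_on UNIV"
    using assms by (intro summable_on_add summable_on_cmult_right ell2_summable)
  then have "sqmod (\<lambda>x. g x + h x) summable_on UNIV"
    by (rule summable_on_comparison_test) (auto intro: sq_add_le)
  then show ?thesis by (simp add: ell2_def)
qed

lemma ell2_diff:
  assumes "g \<in> ell2" "h \<in> ell2" shows "(\<lambda>x. g x - h x) \<in> ell2"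
  using ell2_add[OF assms(1) ell2_cmult[OF assms(2), of "-1"]] by simp

lemma ell2_finite_support:
  assumes "finite {x. h x \<noteq> 0}" shows "h \<in> ell2"
proof -
  have "(sqmod h has_sum (\<Sum>x\<in>{x. h x \<noteq> 0}. sqmod h x)) UNIV"
    by (rule has_sum_finite_neutralI) (use assms in auto)
  then show ?thesis by (auto simp: ell2_def summable_on_def)
qed

lemma ell2_delta [simp]: "delta y \<in> ell2"
  by (rule ell2_finite_support) (simp add: delta_def)

lemma sum_delta_eq_restrict:
  assumes "finite F"
  shows "(\<lambda>z. \<Sum>y\<in>F. a y * delta y z) = (\<lambda>z. if z \<in> F then a z else 0)"
proof -
  have "\<And>z y. a y * delta y z = (if z = y then a y else 0)" by (simp add: delta_def)
  then show ?thesis using assms by (simp add: sum.delta')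
qed

lemma ell2_sum:
  assumes "finite F" "\<And>y. y \<in> F \<Longrightarrow> k y \<in> ell2"
  shows "(\<lambda>x. \<Sum>y\<in>F. a y * k y x) \<in> ell2"
  using assms
proof (induction F rule: finite_induct)
  case (insert z F)
  have "(\<lambda>x. a z * k z x + (\<Sum>y\<in>F. a y * k y x)) \<in> ell2"
    by (rule ell2_add) (use insert ell2_cmult in auto)
  then show ?case using insert by simp
qed simp

lemma ell2_norm_nonneg: "ell2_norm h \<ge> 0"
  unfolding ell2_norm_def by (simp add: infsum_nonneg)

lemma power2_ell2_norm: "(ell2_norm h)\<^sup>2 = infsum (sqmod h) UNIV"
  unfolding ell2_norm_def by (simp add: infsum_nonneg)

lemma ell2_norm_zero [simp]: "ell2_norm (\<lambda>x. 0) = 0"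
  by (simp add: ell2_norm_def)

lemma norm_le_ell2_norm:
  assumes "h \<in> ell2" shows "cmod (h x) \<le> ell2_norm h"
proof -
  have "infsum (sqmod h) {x} \<le> infsum (sqmod h) UNIV"
    by (rule infsum_mono2) (use assms in \<open>auto simp: ell2_def\<close>)
  then have "(cmod (h x))\<^sup>2 \<le> (ell2_norm h)\<^sup>2" by (simp add: power2_ell2_norm)
  then show ?thesis by (rule power2_le_imp_le) (simp add: ell2_norm_nonneg)
qed

lemma ell2_norm_eq_0_iff:
  assumes "h \<in> ell2" shows "ell2_norm h = 0 \<longleftrightarrow> h = (\<lambda>x. 0)"
  using norm_le_ell2_norm[OF assms] by fastforce

lemma ell2_norm_mono:
  assumes "h \<in> ell2" "\<And>x. cmod (k x) \<le> cmod (h x)"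
  shows "ell2_norm k \<le> ell2_norm h"
proof -
  have "infsum (sqmod k) UNIV \<le> infsum (sqmod h) UNIV"
    using assms ell2_dominated[OF assms]
    by (intro infsum_mono) (auto simp: ell2_def intro: power_mono)
  then show ?thesis unfolding ell2_norm_def by simp
qed

lemma ell2_norm_cmult: "ell2_norm (\<lambda>x. c * h x) = cmod c * ell2_norm h"
proof -
  have "infsum (sqmod (\<lambda>x. c * h x)) UNIV = (cmod c)\<^sup>2 * infsum (sqmod h) UNIV"
    by (simp add: norm_mult power_mult_distrib infsum_cmult_right')
  then show ?thesis unfolding ell2_norm_def by (simp add: real_sqrt_mult)
qed

lemma ell2_norm_delta [simp]: "ell2_norm (delta y) = 1"
proof -
  have "infsum (sqmod (delta y)) UNIV = (\<Sum>x\<in>{y}. sqmod (delta y) x)"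
    by (rule infsumI, rule has_sum_finite_neutralI[where B="{y}"]) (auto simp: delta_def)
  then show ?thesis unfolding ell2_norm_def by (simp add: delta_def)
qed

lemma ell2_cauchy_schwarz_abs:
  assumes "g \<in> ell2" "h \<in> ell2"
  shows "(\<lambda>x. cmod (g x) * cmod (h x)) summable_on UNIV"
    and "infsum (\<lambda>x. cmod (g x) * cmod (h x)) UNIV \<le> ell2_norm g * ell2_norm h"
proof -
  have partial_sums: "(\<Sum>x\<in>F. cmod (g x) * cmod (h x)) \<le> ell2_norm g * ell2_norm h"
    if "finite F" for F
  proof -
    have L2_le: "L2_set (\<lambda>x. cmod (k x)) F \<le> ell2_norm k" if "k \<in> ell2" for k
      unfolding L2_set_def ell2_norm_def
      by (intro real_sqrt_le_mono finite_sum_le_infsum ell2_summable that \<open>finite F\<close>) auto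
    have "(\<Sum>x\<in>F. cmod (g x) * cmod (h x))
        \<le> L2_set (\<lambda>x. cmod (g x)) F * L2_set (\<lambda>x. cmod (h x)) F"
      using L2_set_mult_ineq[of "\<lambda>x. cmod (g x)" "\<lambda>x. cmod (h x)" F] by simp
    also have "\<dots> \<le> ell2_norm g * ell2_norm h"
      by (intro mult_mono L2_le assms L2_set_nonneg ell2_norm_nonneg)
    finally show ?thesis .
  qed
  show summable: "(\<lambda>x. cmod (g x) * cmod (h x)) summable_on UNIV"
    by (rule nonneg_bdd_above_summable_on) (auto intro!: bdd_aboveI2 partial_sums)
  show "infsum (\<lambda>x. cmod (g x) * cmod (h x)) UNIV \<le> ell2_norm g * ell2_norm h"
    by (rule infsum_le_finite_sums[OF summable partial_sums])
qed

lemma ell2_norm_triangle: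
  assumes g: "g \<in> ell2" and k: "k \<in> ell2"
  shows "ell2_norm (\<lambda>x. g x + k x) \<le> ell2_norm g + ell2_norm k"
proof -
  note cs = ell2_cauchy_schwarz_abs[OF g k]
  have sg: "sqmod g summable_on UNIV" and sk: "sqmod k summable_on UNIV"
    using g k by (simp_all add: ell2_summable)
  have cross: "(\<lambda>x. 2 * (cmod (g x) * cmod (k x))) summable_on UNIV"
    by (rule summable_on_cmult_right[OF cs(1)])
  have bound: "(\<lambda>x. sqmod g x + 2 * (cmod (g x) * cmod (k x)) + sqmod k x) summable_on UNIV"
    by (intro summable_on_add sg sk cross)
  have "infsum (sqmod (\<lambda>x. g x + k x)) UNIV
      \<le> infsum (\<lambda>x. sqmod g x + 2 * (cmod (g x) * cmod (k x)) + sqmod k x) UNIV"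
  proof (rule infsum_mono[OF ell2_summable[OF ell2_add[OF g k]] bound])
    fix x
    have "(cmod (g x + k x))\<^sup>2 \<le> (cmod (g x) + cmod (k x))\<^sup>2"
      by (simp add: power_mono norm_triangle_ineq)
    then show "sqmod (\<lambda>x. g x + k x) x \<le> sqmod g x + 2 * (cmod (g x) * cmod (k x)) + sqmod k x"
      by (simp add: power2_sum)
  qed
  also have "\<dots> = infsum (sqmod g) UNIV + 2 * infsum (\<lambda>x. cmod (g x) * cmod (k x)) UNIV
      + infsum (sqmod k) UNIV"
    by (simp add: infsum_add sg sk cross summable_on_add infsum_cmult_right')
  also have "\<dots> \<le> (ell2_norm g + ell2_norm k)\<^sup>2"
    using cs(2) by (simp add: power2_sum power2_ell2_norm)
  finally have "(ell2_norm (\<lambda>x. g x + k x))\<^sup>2 \<le> (ell2_norm g + ell2_norm k)\<^sup>2"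
    by (simp add: power2_ell2_norm)
  then show ?thesis
    by (rule power2_le_imp_le) (simp add: ell2_norm_nonneg)
qed

lemma ell2_norm_diff:
  assumes "g \<in> ell2" "k \<in> ell2"
  shows "ell2_norm (\<lambda>x. g x - k x) \<le> ell2_norm g + ell2_norm k"
  using ell2_norm_triangle[OF assms(1) ell2_cmult[OF assms(2), of "-1"]]
    ell2_norm_cmult[of "-1" k] by simp

lemma ell2_tail_small:
  assumes "g \<in> ell2" "e > 0"
  obtains F where "finite F" "ell2_norm (\<lambda>z. if z \<in> F then 0 else g z) \<le> e"
proof -
  obtain F where F: "finite F" and approx: "dist (sum (sqmod g) F) (infsum (sqmod g) UNIV) \<le> e\<^sup>2"
    using infsum_finite_approximation[OF ell2_summable[OF assms(1)], of "e\<^sup>2"] assms(2) by auto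
  define head where "head = (\<lambda>z. if z \<in> F then g z else 0)"
  define tail where "tail = (\<lambda>z. if z \<in> F then 0 else g z)"
  have "head \<in> ell2" "tail \<in> ell2"
    by (rule ell2_dominated[OF assms(1)], simp add: head_def tail_def)+
  then have summable: "sqmod head summable_on UNIV" "sqmod tail summable_on UNIV"
    by (simp_all add: ell2_summable)
  have head_sum: "infsum (sqmod head) UNIV = sum (sqmod g) F"
    by (rule infsumI, rule has_sum_finite_neutralI[where B=F]) (auto simp: F head_def)
  have "infsum (sqmod g) UNIV = infsum (\<lambda>z. sqmod head z + sqmod tail z) UNIV"
    by (rule infsum_cong) (simp add: head_def tail_def)
  also have "\<dots> = sum (sqmod g) F + infsum (sqmod tail) UNIV"
    by (simp only: infsum_add[OF summable] head_sum)
  finally have "infsum (sqmod tail) UNIV \<le> e\<^sup>2"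
    using approx unfolding dist_real_def by linarith
  then have "(ell2_norm tail)\<^sup>2 \<le> e\<^sup>2"
    by (simp only: power2_ell2_norm)
  then have "ell2_norm tail \<le> e"
    by (rule power2_le_imp_le) (use assms(2) in simp)
  then show ?thesis unfolding tail_def by (rule that[OF F])
qed

lemma ell2_inner_summable:
  assumes "g \<in> ell2" "h \<in> ell2"
  shows "(\<lambda>x. cnj (g x) * h x) summable_on UNIV"
  by (rule abs_summable_summable) (use ell2_cauchy_schwarz_abs(1)[OF assms] in \<open>simp add: norm_mult\<close>)

lemma ell2_cauchy_schwarz:
  assumes "g \<in> ell2" "h \<in> ell2"
  shows "cmod (ell2_inner g h) \<le> ell2_norm g * ell2_norm h"
proof -
  have "cmod (ell2_inner g h) \<le> infsum (\<lambda>x. norm (cnj (g x) * h x)) UNIV"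
    unfolding ell2_inner_def
    by (rule norm_infsum_bound) (use ell2_cauchy_schwarz_abs(1)[OF assms] in \<open>simp add: norm_mult\<close>)
  also have "\<dots> \<le> ell2_norm g * ell2_norm h"
    using ell2_cauchy_schwarz_abs(2)[OF assms] by (simp add: norm_mult)
  finally show ?thesis .
qed

lemma ell2_inner_add_left:
  assumes "g1 \<in> ell2" "g2 \<in> ell2" "h \<in> ell2"
  shows "ell2_inner (\<lambda>x. g1 x + g2 x) h = ell2_inner g1 h + ell2_inner g2 h"
  unfolding ell2_inner_def using ell2_inner_summable[OF assms(1,3)] ell2_inner_summable[OF assms(2,3)]
  by (simp add: distrib_right infsum_add)

lemma ell2_inner_add_right:
  assumes "g \<in> ell2" "h1 \<in> ell2" "h2 \<in> ell2"
  shows "ell2_inner g (\<lambda>x. h1 x + h2 x) = ell2_inner g h1 + ell2_inner g h2"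
  unfolding ell2_inner_def using ell2_inner_summable[OF assms(1,2)] ell2_inner_summable[OF assms(1,3)]
  by (simp add: distrib_left infsum_add)

lemma ell2_inner_cmult_left: "ell2_inner (\<lambda>x. c * g x) h = cnj c * ell2_inner g h"
  unfolding ell2_inner_def by (simp add: mult.assoc infsum_cmult_right')

lemma ell2_inner_cmult_right: "ell2_inner g (\<lambda>x. c * h x) = c * ell2_inner g h"
  unfolding ell2_inner_def by (simp add: mult.left_commute infsum_cmult_right')

lemma ell2_inner_commute: "ell2_inner g h = cnj (ell2_inner h g)"
  unfolding ell2_inner_def infsum_cnj[symmetric] by (simp add: mult.commute)

lemma ell2_inner_finite_support:
  assumes "finite F" "\<And>z. z \<notin> F \<Longrightarrow> g z = 0"
  shows "ell2_inner g h = (\<Sum>y\<in>F. cnj (g y) * h y)"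
  unfolding ell2_inner_def
  by (rule infsumI, rule has_sum_finite_neutralI[where B=F]) (use assms in auto)

lemma ell2_inner_delta_left [simp]: "ell2_inner (delta y) h = h y"
  by (subst ell2_inner_finite_support[where F="{y}"]) (auto simp: delta_def)

lemma ell2_inner_delta_right [simp]: "ell2_inner h (delta y) = cnj (h y)"
  by (subst ell2_inner_commute) simp

lemma ell2_inner_sum_left:
  assumes "finite F" "\<And>y. y \<in> F \<Longrightarrow> k y \<in> ell2" "h \<in> ell2"
  shows "ell2_inner (\<lambda>x. \<Sum>y\<in>F. a y * k y x) h = (\<Sum>y\<in>F. cnj (a y) * ell2_inner (k y) h)"
  using assms(1,2)
proof (induction F rule: finite_induct)
  case (insert z F)
  have "ell2_inner (\<lambda>x. a z * k z x + (\<Sum>y\<in>F. a y * k y x)) h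
      = ell2_inner (\<lambda>x. a z * k z x) h + ell2_inner (\<lambda>x. \<Sum>y\<in>F. a y * k y x) h"
    using insert by (intro ell2_inner_add_left ell2_cmult ell2_sum assms(3)) auto
  then show ?case using insert by (simp add: ell2_inner_cmult_left)
qed (simp add: ell2_inner_def)


section \<open>Bounded operators and their adjoints\<close>

lemma bounded_op_ell2: "bounded_op T \<Longrightarrow> h \<in> ell2 \<Longrightarrow> T h \<in> ell2"
  unfolding bounded_op_def by blast

lemma bounded_op_outside: "bounded_op T \<Longrightarrow> h \<notin> ell2 \<Longrightarrow> T h = (\<lambda>x. 0)"
  unfolding bounded_op_def by blast

lemma bounded_op_add:
  "bounded_op T \<Longrightarrow> g \<in> ell2 \<Longrightarrow> h \<in> ell2 \<Longrightarrow> T (\<lambda>x. g x + h x) = (\<lambda>x. T g x + T h x)"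
  unfolding bounded_op_def by blast

lemma bounded_op_cmult: "bounded_op T \<Longrightarrow> h \<in> ell2 \<Longrightarrow> T (\<lambda>x. c * h x) = (\<lambda>x. c * T h x)"
  unfolding bounded_op_def by blast

lemma bounded_op_zero: "bounded_op T \<Longrightarrow> T (\<lambda>x. 0) = (\<lambda>x. 0)"
  using bounded_op_cmult[of T "\<lambda>x. 0" 0] by simp

lemma bounded_op_bound:
  assumes "bounded_op T"
  obtains C where "C \<ge> 0" "\<And>h. h \<in> ell2 \<Longrightarrow> ell2_norm (T h) \<le> C * ell2_norm h"
proof -
  obtain C where C: "\<forall>h\<in>ell2. ell2_norm (T h) \<le> C * ell2_norm h"
    using assms unfolding bounded_op_def by blast
  have "ell2_norm (T h) \<le> max C 0 * ell2_norm h" if "h \<in> ell2" for h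
  proof -
    have "ell2_norm (T h) \<le> C * ell2_norm h" using C that by blast
    also have "\<dots> \<le> max C 0 * ell2_norm h"
      by (rule mult_right_mono) (auto simp: ell2_norm_nonneg)
    finally show ?thesis .
  qed
  with that[of "max C 0"] show ?thesis by simp
qed

lemma bounded_op_sum:
  assumes "bounded_op T" "finite F" "\<And>y. y \<in> F \<Longrightarrow> k y \<in> ell2"
  shows "T (\<lambda>x. \<Sum>y\<in>F. a y * k y x) = (\<lambda>x. \<Sum>y\<in>F. a y * T (k y) x)"
  using assms(2,3)
proof (induction F rule: finite_induct)
  case (insert z F)
  have "T (\<lambda>x. a z * k z x + (\<Sum>y\<in>F. a y * k y x))
        = (\<lambda>x. T (\<lambda>x. a z * k z x) x + T (\<lambda>x. \<Sum>y\<in>F. a y * k y x) x)"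
    using insert by (intro bounded_op_add[OF assms(1)] ell2_cmult ell2_sum) auto
  then show ?case using insert bounded_op_cmult[OF assms(1)] by simp
qed (simp add: bounded_op_zero[OF assms(1)])

lemma bounded_op_finite_support:
  assumes "bounded_op T" "finite F" "\<And>z. z \<notin> F \<Longrightarrow> g z = 0"
  shows "T g = (\<lambda>x. \<Sum>y\<in>F. g y * T (delta y) x)"
proof -
  have "g = (\<lambda>z. \<Sum>y\<in>F. g y * delta y z)"
    using sum_delta_eq_restrict[OF assms(2)] assms(3) by auto
  then have "T g = T (\<lambda>z. \<Sum>y\<in>F. g y * delta y z)" by simp
  also have "\<dots> = (\<lambda>x. \<Sum>y\<in>F. g y * T (delta y) x)"
    by (rule bounded_op_sum[OF assms(1,2)]) simp
  finally show ?thesis .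
qed

text \<open>The adjoint of \<open>T\<close> is \<open>h \<mapsto> (\<lambda>y. ell2_inner (T (delta y)) h)\<close>; the defining identity
  is immediate for finitely supported \<open>g\<close> and extends to all of \<open>ell2\<close> by cutting off small tails.\<close>

lemma bounded_op_inner_finite_support:
  assumes "bounded_op T" "finite F" "\<And>z. z \<notin> F \<Longrightarrow> g z = 0" "h \<in> ell2"
  shows "ell2_inner (T g) h = ell2_inner g (\<lambda>y. ell2_inner (T (delta y)) h)"
proof -
  have "ell2_inner (T g) h = ell2_inner (\<lambda>x. \<Sum>y\<in>F. g y * T (delta y) x) h"
    using bounded_op_finite_support[OF assms(1-3)] by simp
  also have "\<dots> = (\<Sum>y\<in>F. cnj (g y) * ell2_inner (T (delta y)) h)"
    by (rule ell2_inner_sum_left) (simp_all add: bounded_op_ell2[OF assms(1)] assms(2,4))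
  also have "\<dots> = ell2_inner g (\<lambda>y. ell2_inner (T (delta y)) h)"
    by (rule ell2_inner_finite_support[OF assms(2,3), symmetric])
  finally show ?thesis .
qed

text \<open>Its \<open>ell2\<close> bound: the truncation \<open>g\<close> of this vector to \<open>F\<close> satisfies
  \<open>\<parallel>g\<parallel>\<^sup>2 = ell2_inner (T g) h \<le> C \<parallel>g\<parallel> \<parallel>h\<parallel>\<close>.\<close>

lemma bounded_op_sum_sqmod_inner_delta_le:
  assumes T: "bounded_op T" and C0: "C \<ge> 0"
    and C: "\<And>h. h \<in> ell2 \<Longrightarrow> ell2_norm (T h) \<le> C * ell2_norm h"
    and h: "h \<in> ell2" and F: "finite F"
  shows "(\<Sum>y\<in>F. (cmod (ell2_inner (T (delta y)) h))\<^sup>2) \<le> (C * ell2_norm h)\<^sup>2"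
proof -
  define c where "c y = ell2_inner (T (delta y)) h" for y
  define g where "g = (\<lambda>z. if z \<in> F then c z else 0)"
  define s where "s = (\<Sum>y\<in>F. (cmod (c y))\<^sup>2)"
  have s0: "s \<ge> 0" unfolding s_def by (simp add: sum_nonneg)
  have g_supp: "\<And>z. z \<notin> F \<Longrightarrow> g z = 0" by (simp add: g_def)
  have g: "g \<in> ell2" by (rule ell2_finite_support) (use F in \<open>simp add: g_def\<close>)
  have "ell2_inner (T g) h = ell2_inner g c"
    unfolding c_def by (rule bounded_op_inner_finite_support[OF T F g_supp h])
  also have "\<dots> = (\<Sum>y\<in>F. cnj (g y) * c y)"
    by (rule ell2_inner_finite_support[OF F g_supp])
  also have "\<dots> = (\<Sum>y\<in>F. cnj (c y) * c y)"
    by (rule sum.cong) (simp_all add: g_def)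
  also have "\<dots> = complex_of_real s"
    by (simp add: s_def complex_norm_square mult.commute del: of_real_power)
  finally have inner: "ell2_inner (T g) h = complex_of_real s" .
  have "infsum (sqmod g) UNIV = s"
    unfolding s_def by (rule infsumI, rule has_sum_finite_neutralI[where B=F]) (auto simp: F g_def)
  then have norm_g: "ell2_norm g = sqrt s" by (simp add: ell2_norm_def)
  have "sqrt s * sqrt s = cmod (ell2_inner (T g) h)" using inner s0 by simp
  also have "\<dots> \<le> ell2_norm (T g) * ell2_norm h"
    by (rule ell2_cauchy_schwarz[OF bounded_op_ell2[OF T g] h])
  also have "\<dots> \<le> (C * sqrt s) * ell2_norm h"
    by (rule mult_right_mono) (use C[OF g] norm_g in \<open>simp_all add: ell2_norm_nonneg\<close>)
  also have "\<dots> = (C * ell2_norm h) * sqrt s"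
    by (simp only: ac_simps)
  finally have le: "sqrt s * sqrt s \<le> (C * ell2_norm h) * sqrt s" .
  have "sqrt s \<le> C * ell2_norm h"
  proof (cases "s = 0")
    case True
    then show ?thesis using C0 by (simp add: ell2_norm_nonneg)
  next
    case False
    show ?thesis by (rule mult_right_le_imp_le[OF le]) (use False s0 in simp)
  qed
  then show ?thesis unfolding s_def c_def by (rule sqrt_le_D)
qed


lemma bounded_op_inner_delta_column:
  assumes T: "bounded_op T" and C0: "C \<ge> 0"
    and C: "\<And>h. h \<in> ell2 \<Longrightarrow> ell2_norm (T h) \<le> C * ell2_norm h" and h: "h \<in> ell2"
  shows "(\<lambda>y. ell2_inner (T (delta y)) h) \<in> ell2"
    and "ell2_norm (\<lambda>y. ell2_inner (T (delta y)) h) \<le> C * ell2_norm h"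
proof -
  note partial_sums = bounded_op_sum_sqmod_inner_delta_le[OF T C0 C h]
  have summable: "sqmod (\<lambda>y. ell2_inner (T (delta y)) h) summable_on UNIV"
    by (rule nonneg_bdd_above_summable_on) (auto intro!: bdd_aboveI2 partial_sums)
  then show "(\<lambda>y. ell2_inner (T (delta y)) h) \<in> ell2" by (simp add: ell2_def)
  have "infsum (sqmod (\<lambda>y. ell2_inner (T (delta y)) h)) UNIV \<le> (C * ell2_norm h)\<^sup>2"
    by (rule infsum_le_finite_sums[OF summable partial_sums])
  then show "ell2_norm (\<lambda>y. ell2_inner (T (delta y)) h) \<le> C * ell2_norm h"
    unfolding ell2_norm_def[of "\<lambda>y. ell2_inner (T (delta y)) h"]
    using C0 ell2_norm_nonneg[of h] by (intro real_le_lsqrt) simp_all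
qed

lemma bounded_op_inner_defect_tail:
  assumes T: "bounded_op T" and g: "g \<in> ell2" and h: "h \<in> ell2" and F: "finite F"
  defines "c \<equiv> \<lambda>y. ell2_inner (T (delta y)) h"
    and "tail \<equiv> \<lambda>z. if z \<in> F then 0 else g z"
  assumes c: "c \<in> ell2"
  shows "ell2_inner (T g) h - ell2_inner g c = ell2_inner (T tail) h - ell2_inner tail c"
proof -
  define head where "head = (\<lambda>z. if z \<in> F then g z else 0)"
  have head: "head \<in> ell2" and tail: "tail \<in> ell2"
    by (rule ell2_dominated[OF g], simp add: head_def tail_def)+
  have g_split: "g = (\<lambda>z. head z + tail z)" by (auto simp: head_def tail_def)
  have "ell2_inner (T g) h = ell2_inner (T head) h + ell2_inner (T tail) h"
    unfolding g_split bounded_op_add[OF T head tail]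
    by (intro ell2_inner_add_left bounded_op_ell2[OF T] head tail h)
  moreover have "ell2_inner g c = ell2_inner head c + ell2_inner tail c"
    unfolding g_split by (intro ell2_inner_add_left head tail c)
  moreover have "ell2_inner (T head) h = ell2_inner head c"
    unfolding c_def by (rule bounded_op_inner_finite_support[OF T F _ h]) (simp add: head_def)
  ultimately show ?thesis by simp
qed

lemma bounded_op_inner_eq_inner_delta_column:
  assumes T: "bounded_op T" and g: "g \<in> ell2" and h: "h \<in> ell2"
  shows "ell2_inner (T g) h = ell2_inner g (\<lambda>y. ell2_inner (T (delta y)) h)"
proof -
  obtain C where C0: "C \<ge> 0" and C: "\<And>h. h \<in> ell2 \<Longrightarrow> ell2_norm (T h) \<le> C * ell2_norm h"
    using bounded_op_bound[OF T] by blast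
  define c where "c = (\<lambda>y. ell2_inner (T (delta y)) h)"
  have c: "c \<in> ell2" unfolding c_def by (rule bounded_op_inner_delta_column(1)[OF T C0 C h])
  define K where "K = C * ell2_norm h + ell2_norm c"
  have K0: "K \<ge> 0" unfolding K_def using C0 by (simp add: ell2_norm_nonneg)
  have "cmod (ell2_inner (T g) h - ell2_inner g c) \<le> 0 + e" if e: "e > 0" for e
  proof -
    obtain F where F: "finite F"
      and small: "ell2_norm (\<lambda>z. if z \<in> F then 0 else g z) \<le> e / (K + 1)"
      using ell2_tail_small[OF g, of "e / (K + 1)"] e K0 by auto
    define tail where "tail = (\<lambda>z. if z \<in> F then 0 else g z)"
    have tail: "tail \<in> ell2" unfolding tail_def by (rule ell2_dominated[OF g]) simp
    have "cmod (ell2_inner (T g) h - ell2_inner g c) = cmod (ell2_inner (T tail) h - ell2_inner tail c)"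
      using bounded_op_inner_defect_tail[OF T g h F] c unfolding c_def tail_def by simp
    also have "\<dots> \<le> cmod (ell2_inner (T tail) h) + cmod (ell2_inner tail c)"
      by (rule norm_triangle_ineq4)
    also have "\<dots> \<le> ell2_norm (T tail) * ell2_norm h + ell2_norm tail * ell2_norm c"
      by (intro add_mono ell2_cauchy_schwarz bounded_op_ell2[OF T] tail h c)
    also have "\<dots> \<le> (C * ell2_norm tail) * ell2_norm h + ell2_norm tail * ell2_norm c"
      by (intro add_mono mult_right_mono C tail ell2_norm_nonneg order_refl)
    also have "\<dots> = K * ell2_norm tail" unfolding K_def by (simp add: algebra_simps)
    also have "\<dots> \<le> K * (e / (K + 1))"
      using small K0 unfolding tail_def by (rule mult_left_mono)
    also have "\<dots> \<le> 0 + e"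
      using e K0 by (simp add: field_simps)
    finally show ?thesis .
  qed
  then have "cmod (ell2_inner (T g) h - ell2_inner g c) \<le> 0" by (rule field_le_epsilon)
  then show ?thesis unfolding c_def by simp
qed

lemma bounded_op_has_adjoint:
  assumes T: "bounded_op T"
  shows "\<exists>S. bounded_op S \<and> (\<forall>g\<in>ell2. \<forall>h\<in>ell2. ell2_inner (T g) h = ell2_inner g (S h))"
proof -
  obtain C where C0: "C \<ge> 0" and C: "\<And>h. h \<in> ell2 \<Longrightarrow> ell2_norm (T h) \<le> C * ell2_norm h"
    using bounded_op_bound[OF T] by blast
  define S where "S h = (if h \<in> ell2 then (\<lambda>y. ell2_inner (T (delta y)) h) else (\<lambda>x. 0))" for h
  note column = bounded_op_inner_delta_column[OF T C0 C]
  have T_delta: "T (delta y) \<in> ell2" for y by (rule bounded_op_ell2[OF T ell2_delta])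
  have "bounded_op S"
    unfolding bounded_op_def
  proof (intro conjI ballI allI impI)
    show "S h \<in> ell2" if "h \<in> ell2" for h using that column(1) by (simp add: S_def)
    show "S h = (\<lambda>x. 0)" if "h \<notin> ell2" for h using that by (simp add: S_def)
    show "S (\<lambda>x. g x + h x) = (\<lambda>x. S g x + S h x)" if "g \<in> ell2" "h \<in> ell2" for g h
      using that ell2_add[OF that] ell2_inner_add_right[OF T_delta that] by (simp add: S_def)
    show "S (\<lambda>x. a * h x) = (\<lambda>x. a * S h x)" if "h \<in> ell2" for a h
      using that ell2_cmult[OF that] by (simp add: S_def ell2_inner_cmult_right)
    show "\<exists>C. \<forall>h\<in>ell2. ell2_norm (S h) \<le> C * ell2_norm h"
      using column(2) by (auto simp: S_def)
  qed
  moreover have "ell2_inner (T g) h = ell2_inner g (S h)" if "g \<in> ell2" "h \<in> ell2" for g h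
    using bounded_op_inner_eq_inner_delta_column[OF T that] that by (simp add: S_def)
  ultimately show ?thesis by blast
qed

lemma
  assumes "bounded_op T"
  shows bounded_op_adj: "bounded_op (adj T)"
    and ell2_inner_adj: "\<And>g h. g \<in> ell2 \<Longrightarrow> h \<in> ell2 \<Longrightarrow> ell2_inner (T g) h = ell2_inner g (adj T h)"
  using someI_ex[OF bounded_op_has_adjoint[OF assms]] unfolding adj_def by blast+

lemma adj_eqI:
  assumes T: "bounded_op T" and S: "bounded_op S"
    and adjoint: "\<And>g h. g \<in> ell2 \<Longrightarrow> h \<in> ell2 \<Longrightarrow> ell2_inner (T g) h = ell2_inner g (S h)"
  shows "adj T = S"
proof
  fix h
  show "adj T h = S h"
  proof (cases "h \<in> ell2")
    case True
    show ?thesis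
    proof
      fix y
      have "adj T h y = ell2_inner (T (delta y)) h" using ell2_inner_adj[OF T ell2_delta True] by simp
      also have "\<dots> = S h y" using adjoint[OF ell2_delta True] by simp
      finally show "adj T h y = S h y" .
    qed
  next
    case False
    then show ?thesis using bounded_op_outside[OF S] bounded_op_outside[OF bounded_op_adj[OF T]] by simp
  qed
qed

lemma adj_delta_apply:
  assumes "bounded_op T"
  shows "adj T (delta x) y = cnj (entry T x y)"
  using ell2_inner_adj[OF assms ell2_delta ell2_delta, of y x] by (simp add: entry_def)

lemma bounded_op_apply_eq_infsum_entry:
  assumes T: "bounded_op T" and h: "h \<in> ell2"
  shows "T h x = infsum (\<lambda>y. entry T x y * h y) UNIV"
proof -
  have "T h x = cnj (ell2_inner (T h) (delta x))" by simp
  also have "\<dots> = cnj (ell2_inner h (adj T (delta x)))" by (simp only: ell2_inner_adj[OF T h ell2_delta])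
  also have "\<dots> = infsum (\<lambda>y. cnj (cnj (h y) * adj T (delta x) y)) UNIV"
    unfolding ell2_inner_def by (rule infsum_cnj[symmetric])
  also have "\<dots> = infsum (\<lambda>y. entry T x y * h y) UNIV"
    by (simp add: adj_delta_apply[OF T] mult.commute)
  finally show ?thesis .
qed

lemma op_norm_le:
  assumes "\<And>h. h \<in> ell2 \<Longrightarrow> ell2_norm (R h) \<le> M * ell2_norm h" "M \<ge> 0"
  shows "op_norm R \<le> M"
  unfolding op_norm_def
proof (rule cSup_least)
  show "{ell2_norm (R h) |h. h \<in> ell2 \<and> ell2_norm h \<le> 1} \<noteq> {}"
    using ell2_zero by fastforce
  fix z assume "z \<in> {ell2_norm (R h) |h. h \<in> ell2 \<and> ell2_norm h \<le> 1}"
  then obtain h where h: "h \<in> ell2" "ell2_norm h \<le> 1" and z: "z = ell2_norm (R h)" by blast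
  have "z \<le> M * ell2_norm h" using assms(1)[OF h(1)] z by simp
  also have "\<dots> \<le> M" using mult_left_mono[OF h(2) assms(2)] by simp
  finally show "z \<le> M" .
qed

lemma ell2_norm_apply_le_op_norm:
  assumes R: "bounded_op R" and h: "h \<in> ell2"
  shows "ell2_norm (R h) \<le> op_norm R * ell2_norm h"
proof (cases "ell2_norm h = 0")
  case True
  then show ?thesis using h bounded_op_zero[OF R] by (simp add: ell2_norm_eq_0_iff)
next
  case False
  define n where "n = ell2_norm h"
  have n: "n > 0" using False ell2_norm_nonneg[of h] unfolding n_def by linarith
  obtain C where C0: "C \<ge> 0" and C: "\<And>h. h \<in> ell2 \<Longrightarrow> ell2_norm (R h) \<le> C * ell2_norm h"
    using bounded_op_bound[OF R] by blast
  have bdd: "bdd_above {ell2_norm (R h) |h. h \<in> ell2 \<and> ell2_norm h \<le> 1}"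
  proof (rule bdd_aboveI)
    fix z assume "z \<in> {ell2_norm (R h) |h. h \<in> ell2 \<and> ell2_norm h \<le> 1}"
    then obtain h where h: "h \<in> ell2" "ell2_norm h \<le> 1" and z: "z = ell2_norm (R h)" by blast
    show "z \<le> C" using z C[OF h(1)] mult_left_mono[OF h(2) C0] by simp
  qed
  define h' where "h' = (\<lambda>x. complex_of_real (1 / n) * h x)"
  have h': "h' \<in> ell2" "ell2_norm h' = 1"
    unfolding h'_def ell2_norm_cmult n_def[symmetric]
    by (rule ell2_cmult[OF h]) (use n in \<open>simp add: norm_divide\<close>)
  have "ell2_norm (R h) / n = ell2_norm (R h')"
    unfolding h'_def bounded_op_cmult[OF R h] ell2_norm_cmult using n by (simp add: norm_divide)
  also have "\<dots> \<le> op_norm R"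
    unfolding op_norm_def by (rule cSup_upper[OF _ bdd]) (use h' in force)
  finally show ?thesis using n unfolding n_def by (simp add: divide_le_eq)
qed

lemma norm_entry_le_op_norm:
  assumes "bounded_op R"
  shows "cmod (entry R x y) \<le> op_norm R"
proof -
  have "cmod (R (delta y) x) \<le> ell2_norm (R (delta y))"
    by (rule norm_le_ell2_norm[OF bounded_op_ell2[OF assms ell2_delta]])
  also have "\<dots> \<le> op_norm R"
    using ell2_norm_apply_le_op_norm[OF assms ell2_delta, of y] by simp
  finally show ?thesis by (simp add: entry_def)
qed

lemma bounded_op_comp:
  assumes A: "bounded_op A" and B: "bounded_op B"
  shows "bounded_op (A \<circ> B)"
proof -
  obtain CA where CA0: "CA \<ge> 0" and CA: "\<And>h. h \<in> ell2 \<Longrightarrow> ell2_norm (A h) \<le> CA * ell2_norm h"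
    using bounded_op_bound[OF A] by blast
  obtain CB where CB: "\<And>h. h \<in> ell2 \<Longrightarrow> ell2_norm (B h) \<le> CB * ell2_norm h"
    using bounded_op_bound[OF B] by blast
  show ?thesis
    unfolding bounded_op_def
  proof (intro conjI ballI allI impI)
    show "(A \<circ> B) h \<in> ell2" if "h \<in> ell2" for h
      using that A B by (simp add: bounded_op_ell2)
    show "(A \<circ> B) h = (\<lambda>x. 0)" if "h \<notin> ell2" for h
      using that bounded_op_outside[OF B] bounded_op_zero[OF A] by simp
    show "(A \<circ> B) (\<lambda>x. g x + h x) = (\<lambda>x. (A \<circ> B) g x + (A \<circ> B) h x)" if "g \<in> ell2" "h \<in> ell2" for g h
      using that by (simp add: bounded_op_add[OF B] bounded_op_add[OF A] bounded_op_ell2[OF B])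
    show "(A \<circ> B) (\<lambda>x. c * h x) = (\<lambda>x. c * (A \<circ> B) h x)" if "h \<in> ell2" for c h
      using that by (simp add: bounded_op_cmult[OF B] bounded_op_cmult[OF A] bounded_op_ell2[OF B])
    show "\<exists>C. \<forall>h\<in>ell2. ell2_norm ((A \<circ> B) h) \<le> C * ell2_norm h"
    proof (intro exI ballI)
      fix h :: "'a \<Rightarrow> complex" assume h: "h \<in> ell2"
      have "ell2_norm ((A \<circ> B) h) \<le> CA * ell2_norm (B h)" using CA bounded_op_ell2[OF B h] by simp
      also have "\<dots> \<le> CA * (CB * ell2_norm h)" by (rule mult_left_mono[OF CB[OF h] CA0])
      finally show "ell2_norm ((A \<circ> B) h) \<le> (CA * CB) * ell2_norm h" by (simp add: mult.assoc)
    qed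
  qed
qed

lemma bounded_op_diff:
  assumes A: "bounded_op A" and B: "bounded_op B"
  shows "bounded_op (\<lambda>h x. A h x - B h x)"
proof -
  obtain CA where CA: "\<And>h. h \<in> ell2 \<Longrightarrow> ell2_norm (A h) \<le> CA * ell2_norm h"
    using bounded_op_bound[OF A] by blast
  obtain CB where CB: "\<And>h. h \<in> ell2 \<Longrightarrow> ell2_norm (B h) \<le> CB * ell2_norm h"
    using bounded_op_bound[OF B] by blast
  show ?thesis
    unfolding bounded_op_def
  proof (intro conjI ballI allI impI)
    show "(\<lambda>x. A h x - B h x) \<in> ell2" if "h \<in> ell2" for h
      using that A B by (simp add: bounded_op_ell2 ell2_diff)
    show "(\<lambda>x. A h x - B h x) = (\<lambda>x. 0)" if "h \<notin> ell2" for h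
      using that bounded_op_outside[OF A] bounded_op_outside[OF B] by simp
    show "(\<lambda>x. A (\<lambda>x. g x + h x) x - B (\<lambda>x. g x + h x) x) = (\<lambda>x. (A g x - B g x) + (A h x - B h x))"
      if "g \<in> ell2" "h \<in> ell2" for g h
      using that by (simp add: bounded_op_add[OF B] bounded_op_add[OF A] algebra_simps)
    show "(\<lambda>x. A (\<lambda>x. c * h x) x - B (\<lambda>x. c * h x) x) = (\<lambda>x. c * (A h x - B h x))"
      if "h \<in> ell2" for c h
      using that by (simp add: bounded_op_cmult[OF B] bounded_op_cmult[OF A] algebra_simps)
    show "\<exists>C. \<forall>h\<in>ell2. ell2_norm (\<lambda>x. A h x - B h x) \<le> C * ell2_norm h"
    proof (intro exI ballI)
      fix h :: "'a \<Rightarrow> complex" assume h: "h \<in> ell2"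
      have "ell2_norm (\<lambda>x. A h x - B h x) \<le> ell2_norm (A h) + ell2_norm (B h)"
        by (rule ell2_norm_diff[OF bounded_op_ell2[OF A h] bounded_op_ell2[OF B h]])
      also have "\<dots> \<le> CA * ell2_norm h + CB * ell2_norm h" by (intro add_mono CA CB h)
      finally show "ell2_norm (\<lambda>x. A h x - B h x) \<le> (CA + CB) * ell2_norm h"
        by (simp add: algebra_simps)
    qed
  qed
qed


section \<open>Weighted partial translations\<close>

definition weighted_translation ::
  "('a \<Rightarrow> complex) \<Rightarrow> ('a \<Rightarrow> 'a) \<Rightarrow> 'a set \<Rightarrow> (('a \<Rightarrow> complex) \<Rightarrow> ('a \<Rightarrow> complex))" where
  "weighted_translation f \<theta> D =
     (\<lambda>h. if h \<in> ell2 then (\<lambda>x. if x \<in> D then f x * h (\<theta> x) else 0) else (\<lambda>x. 0))"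

lemma translate_ell2:
  assumes inj: "inj_on \<theta> D" and h: "h \<in> ell2"
  shows "(\<lambda>x. if x \<in> D then h (\<theta> x) else 0) \<in> ell2"
    and "ell2_norm (\<lambda>x. if x \<in> D then h (\<theta> x) else 0) \<le> ell2_norm h"
proof -
  define k where "k = (\<lambda>x. if x \<in> D then h (\<theta> x) else 0)"
  have summable_image: "sqmod h summable_on (\<theta> ` D)"
    by (rule summable_on_subset[OF ell2_summable[OF h]]) simp
  then have "(sqmod h \<circ> \<theta>) summable_on D"
    using summable_on_reindex[OF inj] by blast
  then have summable: "sqmod k summable_on UNIV"
    by (subst summable_on_cong_neutral[where T=UNIV, symmetric]) (auto simp: k_def)
  then show "(\<lambda>x. if x \<in> D then h (\<theta> x) else 0) \<in> ell2" by (simp add: ell2_def k_def)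
  have "infsum (sqmod k) UNIV = infsum (sqmod h \<circ> \<theta>) D"
    by (rule infsum_cong_neutral) (auto simp: k_def)
  also have "\<dots> = infsum (sqmod h) (\<theta> ` D)"
    by (rule infsum_reindex[OF inj, symmetric])
  also have "\<dots> \<le> infsum (sqmod h) UNIV"
    by (rule infsum_mono2[OF summable_image ell2_summable[OF h]]) auto
  finally show "ell2_norm (\<lambda>x. if x \<in> D then h (\<theta> x) else 0) \<le> ell2_norm h"
    unfolding ell2_norm_def k_def by simp
qed

lemma ell2_bounded_mult:
  assumes h: "h \<in> ell2" and a: "\<And>x. cmod (a x) \<le> M"
  shows "(\<lambda>x. a x * h x) \<in> ell2" and "ell2_norm (\<lambda>x. a x * h x) \<le> M * ell2_norm h"
proof -
  have M: "M \<ge> 0" by (rule order_trans[OF norm_ge_zero a])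
  have dominated: "cmod (a x * h x) \<le> cmod (complex_of_real M * h x)" for x
    using mult_right_mono[OF a norm_ge_zero] M by (simp add: norm_mult)
  show "(\<lambda>x. a x * h x) \<in> ell2"
    by (rule ell2_dominated[OF ell2_cmult[OF h] dominated])
  show "ell2_norm (\<lambda>x. a x * h x) \<le> M * ell2_norm h"
    using ell2_norm_mono[OF ell2_cmult[OF h] dominated] M by (simp add: ell2_norm_cmult)
qed

lemma weighted_translation_ell2:
  assumes inj: "inj_on \<theta> D" and f: "\<And>x. x \<in> D \<Longrightarrow> cmod (f x) \<le> M" and M: "M \<ge> 0"
    and h: "h \<in> ell2"
  shows "weighted_translation f \<theta> D h \<in> ell2"
    and "ell2_norm (weighted_translation f \<theta> D h) \<le> M * ell2_norm h"
proof -
  have eq: "weighted_translation f \<theta> D h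
      = (\<lambda>x. (if x \<in> D then f x else 0) * (if x \<in> D then h (\<theta> x) else 0))"
    using h by (auto simp: weighted_translation_def fun_eq_iff)
  have bound: "cmod (if x \<in> D then f x else 0) \<le> M" for x using f M by simp
  note translate = translate_ell2[OF inj h]
  show "weighted_translation f \<theta> D h \<in> ell2"
    unfolding eq by (rule ell2_bounded_mult(1)[OF translate(1) bound])
  have "ell2_norm (weighted_translation f \<theta> D h) \<le> M * ell2_norm (\<lambda>x. if x \<in> D then h (\<theta> x) else 0)"
    unfolding eq by (rule ell2_bounded_mult(2)[OF translate(1) bound])
  also have "\<dots> \<le> M * ell2_norm h"
    by (rule mult_left_mono[OF translate(2) M])
  finally show "ell2_norm (weighted_translation f \<theta> D h) \<le> M * ell2_norm h" .
qed

lemma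
  assumes "inj_on \<theta> D" "\<And>x. x \<in> D \<Longrightarrow> cmod (f x) \<le> M" "M \<ge> 0"
  shows bounded_op_weighted_translation: "bounded_op (weighted_translation f \<theta> D)"
    and op_norm_weighted_translation_le: "op_norm (weighted_translation f \<theta> D) \<le> M"
proof -
  note W = weighted_translation_ell2[where f=f and \<theta>=\<theta> and D=D and M=M, OF assms]
  show "bounded_op (weighted_translation f \<theta> D)"
    unfolding bounded_op_def
  proof (intro conjI ballI allI impI)
    show "weighted_translation f \<theta> D (\<lambda>x. g x + h x)
        = (\<lambda>x. weighted_translation f \<theta> D g x + weighted_translation f \<theta> D h x)"
      if "g \<in> ell2" "h \<in> ell2" for g h
      using that ell2_add[OF that] by (auto simp: weighted_translation_def fun_eq_iff algebra_simps)
    show "weighted_translation f \<theta> D (\<lambda>x. c * h x) = (\<lambda>x. c * weighted_translation f \<theta> D h x)"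
      if "h \<in> ell2" for c h
      using that ell2_cmult[OF that] by (auto simp: weighted_translation_def fun_eq_iff algebra_simps)
  qed (use W in \<open>auto simp: weighted_translation_def\<close>)
  show "op_norm (weighted_translation f \<theta> D) \<le> M"
    by (rule op_norm_le[OF W(2) assms(3)])
qed

lemma weighted_translation_cong:
  assumes "\<And>x. x \<in> D \<Longrightarrow> f x = f' x" "\<And>x. x \<in> D \<Longrightarrow> \<theta> x = \<theta>' x"
  shows "weighted_translation f \<theta> D = weighted_translation f' \<theta>' D"
  using assms by (auto simp: weighted_translation_def fun_eq_iff)

lemma mult_op_eq_weighted_translation: "mult_op f = weighted_translation f (\<lambda>x. x) UNIV"
  by (auto simp: mult_op_def weighted_translation_def fun_eq_iff)

lemma weighted_translation_id:
  "weighted_translation f (\<lambda>x. x) D = mult_op (\<lambda>x. if x \<in> D then f x else 0)"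
  by (auto simp: mult_op_def weighted_translation_def fun_eq_iff)

lemma partial_translation_eq_weighted_translation:
  "partial_translation \<theta> D = weighted_translation (\<lambda>x. 1) \<theta> D"
  by (auto simp: partial_translation_def weighted_translation_def fun_eq_iff)

lemma weighted_translation_comp:
  assumes "inj_on \<theta>' D'" "\<And>x. x \<in> D' \<Longrightarrow> cmod (f' x) \<le> M" "M \<ge> 0"
  shows "weighted_translation f \<theta> D \<circ> weighted_translation f' \<theta>' D'
    = weighted_translation (\<lambda>x. f x * f' (\<theta> x)) (\<lambda>x. \<theta>' (\<theta> x)) {x \<in> D. \<theta> x \<in> D'}"
  using weighted_translation_ell2(1)[where f=f' and \<theta>=\<theta>' and D=D' and M=M, OF assms]
  by (auto simp: weighted_translation_def fun_eq_iff)

lemma mult_op_comp_partial_translation: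
  assumes "inj_on \<theta> D"
  shows "mult_op f \<circ> partial_translation \<theta> D = weighted_translation f \<theta> D"
  unfolding mult_op_eq_weighted_translation partial_translation_eq_weighted_translation
  by (subst weighted_translation_comp[OF assms, where M=1]) simp_all

lemma adj_weighted_translation:
  assumes inj: "inj_on \<theta> D" and f: "\<And>x. x \<in> D \<Longrightarrow> cmod (f x) \<le> M" and M: "M \<ge> 0"
  shows "adj (weighted_translation f \<theta> D)
    = weighted_translation (\<lambda>y. cnj (f (inv_into D \<theta> y))) (inv_into D \<theta>) (\<theta> ` D)"
proof (rule adj_eqI[OF bounded_op_weighted_translation[OF inj f M]])
  let ?i = "inv_into D \<theta>"
  have f': "cmod (cnj (f (?i y))) \<le> M" if "y \<in> \<theta> ` D" for y
    using f[OF inv_into_into[OF that]] by simp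
  show "bounded_op (weighted_translation (\<lambda>y. cnj (f (?i y))) ?i (\<theta> ` D))"
    by (rule bounded_op_weighted_translation[OF inj_on_inv_into f' M]) simp
  fix g h :: "'a \<Rightarrow> complex" assume g: "g \<in> ell2" and h: "h \<in> ell2"
  have "ell2_inner (weighted_translation f \<theta> D g) h = infsum (\<lambda>x. cnj (f x) * cnj (g (\<theta> x)) * h x) D"
    unfolding ell2_inner_def weighted_translation_def using g by (intro infsum_cong_neutral) auto
  also have "\<dots> = infsum ((\<lambda>y. cnj (g y) * (cnj (f (?i y)) * h (?i y))) \<circ> \<theta>) D"
    by (rule infsum_cong) (simp add: inv_into_f_f[OF inj])
  also have "\<dots> = infsum (\<lambda>y. cnj (g y) * (cnj (f (?i y)) * h (?i y))) (\<theta> ` D)"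
    by (rule infsum_reindex[OF inj, symmetric])
  also have "\<dots> = ell2_inner g (weighted_translation (\<lambda>y. cnj (f (?i y))) ?i (\<theta> ` D) h)"
    unfolding ell2_inner_def weighted_translation_def using h by (intro infsum_cong_neutral) auto
  finally show "ell2_inner (weighted_translation f \<theta> D g) h
      = ell2_inner g (weighted_translation (\<lambda>y. cnj (f (?i y))) ?i (\<theta> ` D) h)" .
qed

lemma entry_weighted_translation:
  "entry (weighted_translation f \<theta> D) x y = (if x \<in> D \<and> \<theta> x = y then f x else 0)"
  by (simp add: entry_def weighted_translation_def) (simp add: delta_def)

lemma weighted_translation_comp_inverse:
  assumes inj: "inj_on \<theta> D" and g: "\<And>y. y \<in> \<theta> ` D \<Longrightarrow> cmod (g y) \<le> M" and M: "M \<ge> 0"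
  shows "weighted_translation f \<theta> D \<circ> weighted_translation g (inv_into D \<theta>) (\<theta> ` D)
    = mult_op (\<lambda>x. if x \<in> D then f x * g (\<theta> x) else 0)"
proof -
  have "weighted_translation f \<theta> D \<circ> weighted_translation g (inv_into D \<theta>) (\<theta> ` D)
    = weighted_translation (\<lambda>x. f x * g (\<theta> x)) (\<lambda>x. inv_into D \<theta> (\<theta> x)) {x \<in> D. \<theta> x \<in> \<theta> ` D}"
    by (rule weighted_translation_comp[where M=M]) (use g M in \<open>auto intro: inj_on_inv_into\<close>)
  also have "\<dots> = weighted_translation (\<lambda>x. f x * g (\<theta> x)) (\<lambda>x. x) D"
  proof -
    have "{x \<in> D. \<theta> x \<in> \<theta> ` D} = D" by auto
    then show ?thesis by (simp only:) (rule weighted_translation_cong, auto simp: inv_into_f_f[OF inj])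
  qed
  finally show ?thesis by (simp only: weighted_translation_id)
qed

lemma inverse_comp_weighted_translation:
  assumes inj: "inj_on \<theta> D" and f: "\<And>x. x \<in> D \<Longrightarrow> cmod (f x) \<le> M" and M: "M \<ge> 0"
  shows "weighted_translation g (inv_into D \<theta>) (\<theta> ` D) \<circ> weighted_translation f \<theta> D
    = mult_op (\<lambda>y. if y \<in> \<theta> ` D then g y * f (inv_into D \<theta> y) else 0)"
proof -
  have "weighted_translation g (inv_into D \<theta>) (\<theta> ` D) \<circ> weighted_translation f \<theta> D
    = weighted_translation (\<lambda>y. g y * f (inv_into D \<theta> y)) (\<lambda>y. \<theta> (inv_into D \<theta> y))
        {y \<in> \<theta> ` D. inv_into D \<theta> y \<in> D}"
    by (rule weighted_translation_comp[OF inj f M])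
  also have "\<dots> = weighted_translation (\<lambda>y. g y * f (inv_into D \<theta> y)) (\<lambda>y. y) (\<theta> ` D)"
  proof -
    have "{y \<in> \<theta> ` D. inv_into D \<theta> y \<in> D} = \<theta> ` D" by (auto intro: inv_into_into)
    then show ?thesis by (simp only:) (rule weighted_translation_cong, auto simp: f_inv_into_f)
  qed
  finally show ?thesis by (simp only: weighted_translation_id)
qed


section \<open>Multiplication operators and propagation\<close>

lemma bounded_range_iff: "bounded (range (f :: 'a \<Rightarrow> complex)) \<longleftrightarrow> (\<exists>M. \<forall>x. cmod (f x) \<le> M)"
  unfolding bounded_iff by auto

lemma mult_op_in_linf_ops: "(\<And>x. cmod (f x) \<le> M) \<Longrightarrow> mult_op f \<in> linf_ops"
  unfolding linf_ops_def bounded_range_iff by blast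

lemma chi_apply: "h \<in> ell2 \<Longrightarrow> chi A h = (\<lambda>x. indicator A x * h x)"
  by (simp add: chi_def mult_op_def)

lemma bounded_op_chi: "bounded_op (chi A)"
  unfolding chi_def mult_op_eq_weighted_translation
  by (rule bounded_op_weighted_translation[where M=1]) (auto simp: indicator_def)

lemma ell2_norm_chi_le: "h \<in> ell2 \<Longrightarrow> ell2_norm (chi A h) \<le> ell2_norm h"
  unfolding chi_apply by (rule ell2_norm_mono) (auto simp: indicator_def norm_mult)

lemma entry_chi_comp_chi:
  assumes T: "bounded_op T"
  shows "entry (chi A \<circ> T \<circ> chi B) x y = (if x \<in> A \<and> y \<in> B then entry T x y else 0)"
proof -
  have "chi B (delta y) = (\<lambda>z. indicator B y * delta y z)"
    unfolding chi_apply[OF ell2_delta] by (auto simp: fun_eq_iff delta_def indicator_def)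
  then have "T (chi B (delta y)) = (\<lambda>z. indicator B y * T (delta y) z)"
    by (simp add: bounded_op_cmult[OF T])
  then have "entry (chi A \<circ> T \<circ> chi B) x y = chi A (\<lambda>z. indicator B y * T (delta y) z) x"
    by (simp add: entry_def)
  also have "\<dots> = indicator A x * (indicator B y * entry T x y)"
    by (simp add: chi_apply[OF ell2_cmult[OF bounded_op_ell2[OF T ell2_delta]]] entry_def)
  finally show ?thesis by (auto simp: indicator_def)
qed

lemma chi_finite_propagation_chi:
  assumes S: "bounded_op S" and propagation: "\<And>x y. dist x y > r \<Longrightarrow> entry S x y = 0"
    and far: "setdist A B > r" and h: "h \<in> ell2"
  shows "chi A (S (chi B h)) = (\<lambda>x. 0)"
proof
  fix x
  have "S (chi B h) x = 0" if x: "x \<in> A"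
  proof -
    have "S (chi B h) x = infsum (\<lambda>y. entry S x y * chi B h y) UNIV"
      using bounded_op_apply_eq_infsum_entry[OF S bounded_op_ell2[OF bounded_op_chi h]] .
    also have "\<dots> = 0"
    proof (rule infsum_0)
      fix y
      show "entry S x y * chi B h y = 0"
      proof (cases "y \<in> B")
        case True
        then have "dist x y > r" using setdist_le_dist[OF x True] far by linarith
        then show ?thesis using propagation by simp
      qed (simp add: chi_apply[OF h])
    qed
    finally show ?thesis .
  qed
  then show "chi A (S (chi B h)) x = 0"
    using bounded_op_ell2[OF S bounded_op_ell2[OF bounded_op_chi h]]
    by (simp add: chi_apply indicator_def)
qed

lemma uniform_roe_subset_quasi_local: "uniform_roe \<subseteq> quasi_local"
proof
  fix T :: "('a \<Rightarrow> complex) \<Rightarrow> ('a \<Rightarrow> complex)"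
  assume "T \<in> uniform_roe"
  then have T: "bounded_op T" and approx: "\<And>\<epsilon>. \<epsilon> > 0 \<Longrightarrow>
      \<exists>S. bounded_op S \<and> finite_propagation S \<and> op_norm (\<lambda>h x. T h x - S h x) \<le> \<epsilon>"
    unfolding uniform_roe_def by auto
  have "\<exists>r>0. \<forall>A B. setdist A B \<ge> r \<longrightarrow> op_norm (chi A \<circ> T \<circ> chi B) \<le> \<epsilon>" if \<epsilon>: "\<epsilon> > 0" for \<epsilon>
  proof -
    obtain S where S: "bounded_op S" and "finite_propagation S"
      and close: "op_norm (\<lambda>h x. T h x - S h x) \<le> \<epsilon>" using approx[OF \<epsilon>] by blast
    then obtain r where propagation: "\<And>x y. dist x y > r \<Longrightarrow> entry S x y = 0"
      unfolding finite_propagation_def by blast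
    have TS: "bounded_op (\<lambda>h x. T h x - S h x)" by (rule bounded_op_diff[OF T S])
    have "op_norm (chi A \<circ> T \<circ> chi B) \<le> \<epsilon>" if far: "setdist A B \<ge> max r 0 + 1" for A B
    proof (rule op_norm_le)
      fix h :: "'a \<Rightarrow> complex" assume h: "h \<in> ell2"
      define k where "k = chi B h"
      have k: "k \<in> ell2" unfolding k_def by (rule bounded_op_ell2[OF bounded_op_chi h])
      have beyond_r: "r < setdist A B" using far max.cobounded1[of r 0] by linarith
      have "chi A (S k) = (\<lambda>x. 0)"
        using S propagation beyond_r h unfolding k_def by (rule chi_finite_propagation_chi)
      then have "indicator A x * S k x = 0" for x
        unfolding chi_apply[OF bounded_op_ell2[OF S k]] by (rule fun_cong)
      moreover have "(\<lambda>x. T k x - S k x) \<in> ell2"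
        by (intro ell2_diff bounded_op_ell2[OF T k] bounded_op_ell2[OF S k])
      ultimately have "(chi A \<circ> T \<circ> chi B) h = chi A (\<lambda>x. T k x - S k x)"
        unfolding comp_apply k_def[symmetric]
        by (simp add: chi_apply bounded_op_ell2[OF T k] fun_eq_iff right_diff_distrib)
      then have "ell2_norm ((chi A \<circ> T \<circ> chi B) h) \<le> ell2_norm (\<lambda>x. T k x - S k x)"
        using ell2_norm_chi_le[OF bounded_op_ell2[OF TS k]] by simp
      also have "\<dots> \<le> op_norm (\<lambda>h x. T h x - S h x) * ell2_norm k"
        using ell2_norm_apply_le_op_norm[OF TS k] by simp
      also have "\<dots> \<le> \<epsilon> * ell2_norm h"
        using close \<epsilon> ell2_norm_chi_le[OF h, of B] unfolding k_def
        by (intro mult_mono) (simp_all add: ell2_norm_nonneg)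
      finally show "ell2_norm ((chi A \<circ> T \<circ> chi B) h) \<le> \<epsilon> * ell2_norm h" .
    qed (use \<epsilon> in simp)
    then show ?thesis by (intro exI[of _ "max r 0 + 1"]) auto
  qed
  with T show "T \<in> quasi_local" unfolding quasi_local_def by blast
qed

lemma normaliser_mono: "\<A> \<subseteq> \<A>' \<Longrightarrow> normaliser \<B> \<A> \<subseteq> normaliser \<B> \<A>'"
  unfolding normaliser_def by blast


section \<open>Decaying weighted translations are normalisers\<close>

lemma weighted_translation_in_uniform_roe:
  assumes inj: "inj_on \<theta> D" and f: "\<And>x. cmod (f x) \<le> M"
    and decay: "\<forall>\<epsilon>>0. \<exists>K>0. \<forall>x\<in>D. dist x (\<theta> x) > K \<longrightarrow> cmod (f x) < \<epsilon>"
  shows "weighted_translation f \<theta> D \<in> uniform_roe"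
proof -
  have M: "M \<ge> 0" by (rule order_trans[OF norm_ge_zero f])
  have "\<exists>S. bounded_op S \<and> finite_propagation S \<and>
      op_norm (\<lambda>h x. weighted_translation f \<theta> D h x - S h x) \<le> \<epsilon>" if \<epsilon>: "\<epsilon> > 0" for \<epsilon>
  proof -
    obtain K where small: "\<And>x. x \<in> D \<Longrightarrow> dist x (\<theta> x) > K \<Longrightarrow> cmod (f x) < \<epsilon>"
      using decay \<epsilon> by blast
    define S where "S = weighted_translation (\<lambda>x. if dist x (\<theta> x) \<le> K then f x else 0) \<theta> D"
    have "bounded_op S"
      unfolding S_def by (rule bounded_op_weighted_translation[OF inj _ M]) (simp add: f M)
    moreover have "finite_propagation S"
      unfolding finite_propagation_def S_def entry_weighted_translation by (intro exI[of _ K]) auto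
    moreover have "(\<lambda>h x. weighted_translation f \<theta> D h x - S h x)
        = weighted_translation (\<lambda>x. if dist x (\<theta> x) \<le> K then 0 else f x) \<theta> D"
      unfolding S_def by (auto simp: weighted_translation_def fun_eq_iff)
    moreover have "op_norm (weighted_translation (\<lambda>x. if dist x (\<theta> x) \<le> K then 0 else f x) \<theta> D)
        \<le> \<epsilon>"
      by (rule op_norm_weighted_translation_le[OF inj])
        (use small \<epsilon> in \<open>auto simp: not_le intro: less_imp_le\<close>)
    ultimately show ?thesis by auto
  qed
  moreover have "bounded_op (weighted_translation f \<theta> D)"
    by (rule bounded_op_weighted_translation[OF inj f M])
  ultimately show ?thesis unfolding uniform_roe_def by blast
qed

lemma weighted_translation_conj_linf_ops:
  assumes inj: "inj_on \<theta> D" and f: "\<And>x. cmod (f x) \<le> M" and b: "b \<in> linf_ops"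
  defines "W \<equiv> weighted_translation f \<theta> D"
  shows "W \<circ> b \<circ> adj W \<in> linf_ops" and "adj W \<circ> b \<circ> W \<in> linf_ops"
proof -
  obtain \<beta> Mb where b_eq: "b = mult_op \<beta>" and \<beta>: "\<And>x. cmod (\<beta> x) \<le> Mb"
    using b unfolding linf_ops_def bounded_range_iff by blast
  have M: "M \<ge> 0" and Mb: "Mb \<ge> 0"
    by (rule order_trans[OF norm_ge_zero f], rule order_trans[OF norm_ge_zero \<beta>])
  let ?i = "inv_into D \<theta>"
  let ?f' = "\<lambda>y. cnj (f (?i y))"
  have f': "cmod (?f' y) \<le> M" for y using f by simp
  have adj_W: "adj W = weighted_translation ?f' ?i (\<theta> ` D)"
    unfolding W_def by (rule adj_weighted_translation[OF inj f M])
  have mult_op_comp: "weighted_translation g \<eta> E \<circ> b = weighted_translation (\<lambda>x. g x * \<beta> (\<eta> x)) \<eta> E"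
    for g \<eta> E
    unfolding b_eq mult_op_eq_weighted_translation by (subst weighted_translation_comp[OF _ \<beta> Mb]) simp_all
  have product: "cmod (u * v * w) \<le> M * Mb * M" if "cmod u \<le> M" "cmod v \<le> Mb" "cmod w \<le> M" for u v w
    unfolding norm_mult using that M Mb by (intro mult_mono) auto
  have left: "W \<circ> b \<circ> adj W = mult_op (\<lambda>x. if x \<in> D then f x * \<beta> (\<theta> x) * ?f' (\<theta> x) else 0)"
    unfolding adj_W unfolding W_def mult_op_comp
    by (rule weighted_translation_comp_inverse[OF inj f' M])
  have "cmod (if x \<in> D then f x * \<beta> (\<theta> x) * ?f' (\<theta> x) else 0) \<le> M * Mb * M" for x
    using product[OF f \<beta> f'] M Mb by simp
  then show "W \<circ> b \<circ> adj W \<in> linf_ops" unfolding left by (rule mult_op_in_linf_ops)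
  have right: "adj W \<circ> b \<circ> W = mult_op (\<lambda>y. if y \<in> \<theta> ` D then ?f' y * \<beta> (?i y) * f (?i y) else 0)"
    unfolding adj_W unfolding W_def mult_op_comp
    by (rule inverse_comp_weighted_translation[OF inj f M])
  have "cmod (if y \<in> \<theta> ` D then ?f' y * \<beta> (?i y) * f (?i y) else 0) \<le> M * Mb * M" for y
    using product[OF f' \<beta> f] M Mb by simp
  then show "adj W \<circ> b \<circ> W \<in> linf_ops" unfolding right by (rule mult_op_in_linf_ops)
qed

lemma partial_translation_in_normaliser_uniform_roe:
  assumes f: "bounded (range f)" and bij: "bij_betw \<theta> D R"
    and decay: "\<forall>\<epsilon>>0. \<exists>K>0. \<forall>x\<in>D. dist x (\<theta> x) > K \<longrightarrow> cmod (f x) < \<epsilon>"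
  shows "mult_op f \<circ> partial_translation \<theta> D \<in> normaliser linf_ops uniform_roe"
proof -
  have inj: "inj_on \<theta> D" using bij by (rule bij_betw_imp_inj_on)
  obtain M where "\<And>x. cmod (f x) \<le> M" using f unfolding bounded_range_iff by blast
  then show ?thesis
    unfolding mult_op_comp_partial_translation[OF inj]
    using weighted_translation_in_uniform_roe[OF inj _ decay] weighted_translation_conj_linf_ops[OF inj]
    unfolding normaliser_def by blast
qed


section \<open>Normalisers are weighted translations\<close>

lemma normaliser_linf_ops_column_sparse:
  assumes T: "bounded_op T" and N: "T \<in> normaliser linf_ops \<A>"
    and nonzero: "entry T x y \<noteq> 0" and "z \<noteq> x"
  shows "entry T z y = 0"
proof -
  obtain g where g: "T \<circ> mult_op (indicator {y}) \<circ> adj T = mult_op g"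
    using N mult_op_in_linf_ops[of "indicator {y}" 1] unfolding normaliser_def linf_ops_def
    by (force simp: indicator_def)
  have "mult_op (indicator {y}) (adj T (delta x)) = (\<lambda>w. adj T (delta x) y * delta y w)"
    using bounded_op_ell2[OF bounded_op_adj[OF T] ell2_delta]
    by (auto simp: mult_op_def fun_eq_iff delta_def indicator_def)
  then have "(\<lambda>w. adj T (delta x) y * T (delta y) w) = mult_op g (delta x)"
    by (simp add: bounded_op_cmult[OF T ell2_delta] flip: g)
  then have "adj T (delta x) y * T (delta y) z = g z * delta x z"
    by (auto simp: mult_op_def fun_eq_iff)
  then have "adj T (delta x) y * T (delta y) z = 0"
    using \<open>z \<noteq> x\<close> by (simp add: delta_def)
  moreover have "adj T (delta x) y \<noteq> 0"
    using nonzero by (simp add: adj_delta_apply[OF T])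
  ultimately show ?thesis by (simp add: entry_def)
qed

lemma normaliser_linf_ops_row_sparse:
  assumes T: "bounded_op T" and N: "T \<in> normaliser linf_ops \<A>"
    and nonzero: "entry T x y \<noteq> 0" and "z \<noteq> y"
  shows "entry T x z = 0"
proof -
  obtain g where g: "adj T \<circ> mult_op (indicator {x}) \<circ> T = mult_op g"
    using N mult_op_in_linf_ops[of "indicator {x}" 1] unfolding normaliser_def linf_ops_def
    by (force simp: indicator_def)
  have "mult_op (indicator {x}) (T (delta y)) = (\<lambda>w. T (delta y) x * delta x w)"
    using bounded_op_ell2[OF T ell2_delta]
    by (auto simp: mult_op_def fun_eq_iff delta_def indicator_def)
  then have "(\<lambda>w. T (delta y) x * adj T (delta x) w) = mult_op g (delta y)"
    by (simp add: bounded_op_cmult[OF bounded_op_adj[OF T] ell2_delta] flip: g)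
  then have "T (delta y) x * adj T (delta x) z = g z * delta y z"
    by (auto simp: mult_op_def fun_eq_iff)
  then have "T (delta y) x * adj T (delta x) z = 0"
    using \<open>z \<noteq> y\<close> by (simp add: delta_def)
  then show ?thesis
    using nonzero by (simp add: adj_delta_apply[OF T] entry_def)
qed

lemma normaliser_linf_ops_eq_weighted_translation:
  assumes T: "bounded_op T" and N: "T \<in> normaliser linf_ops \<A>"
  obtains \<theta> D f where "inj_on \<theta> D" "bounded (range f)" "T = weighted_translation f \<theta> D"
proof -
  define D where "D = {x. \<exists>y. entry T x y \<noteq> 0}"
  define \<theta> where "\<theta> x = (SOME y. entry T x y \<noteq> 0)" for x
  define f where "f x = entry T x (\<theta> x)" for x
  have \<theta>: "entry T x (\<theta> x) \<noteq> 0" if "x \<in> D" for x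
    unfolding \<theta>_def by (rule someI_ex) (use that in \<open>simp add: D_def\<close>)
  have "inj_on \<theta> D"
    using normaliser_linf_ops_column_sparse[OF T N \<theta>] \<theta> by (metis inj_onI)
  moreover have "bounded (range f)"
    unfolding bounded_range_iff f_def using norm_entry_le_op_norm[OF T] by blast
  moreover have "T h x = weighted_translation f \<theta> D h x" for h x
  proof (cases "h \<in> ell2")
    case h: True
    have "T h x = infsum (\<lambda>y. entry T x y * h y) UNIV"
      by (rule bounded_op_apply_eq_infsum_entry[OF T h])
    also have "\<dots> = (if x \<in> D then f x * h (\<theta> x) else 0)"
    proof (cases "x \<in> D")
      case True
      then show ?thesis
        using normaliser_linf_ops_row_sparse[OF T N \<theta>[OF True]]
        by (intro infsumI has_sum_finite_neutralI[where B="{\<theta> x}"]) (auto simp: f_def)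
    qed (simp add: D_def)
    finally show ?thesis using h by (simp add: weighted_translation_def)
  qed (simp add: bounded_op_outside[OF T] weighted_translation_def)
  ultimately show ?thesis using that by blast
qed

lemma quasi_local_weighted_translation_decay:
  assumes "weighted_translation f \<theta> D \<in> quasi_local"
  shows "\<forall>\<epsilon>>0. \<exists>K>0. \<forall>x\<in>D. dist x (\<theta> x) > K \<longrightarrow> cmod (f x) < \<epsilon>"
proof (intro allI impI)
  fix \<epsilon> :: real assume \<epsilon>: "\<epsilon> > 0"
  define W where "W = weighted_translation f \<theta> D"
  have W: "bounded_op W" using assms unfolding W_def quasi_local_def by blast
  have "\<epsilon> / 2 > 0" using \<epsilon> by simp
  with assms have "\<exists>r>0. \<forall>A B. setdist A B \<ge> r \<longrightarrow> op_norm (chi A \<circ> W \<circ> chi B) \<le> \<epsilon> / 2"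
    unfolding W_def quasi_local_def by blast
  then obtain r where r: "r > 0"
    and far: "\<And>A B. setdist A B \<ge> r \<Longrightarrow> op_norm (chi A \<circ> W \<circ> chi B) \<le> \<epsilon> / 2"
    by blast
  have "cmod (f x) < \<epsilon>" if x: "x \<in> D" and "dist x (\<theta> x) > r" for x
  proof -
    let ?R = "chi {x} \<circ> W \<circ> chi {\<theta> x}"
    have "f x = entry ?R x (\<theta> x)"
      unfolding entry_chi_comp_chi[OF W] using x by (simp add: W_def entry_weighted_translation)
    also have "cmod \<dots> \<le> op_norm ?R"
      by (intro norm_entry_le_op_norm bounded_op_comp bounded_op_chi W)
    also have "\<dots> \<le> \<epsilon> / 2" using far \<open>dist x (\<theta> x) > r\<close> by simp
    finally show ?thesis using \<epsilon> by simp
  qed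
  then show "\<exists>K>0. \<forall>x\<in>D. dist x (\<theta> x) > K \<longrightarrow> cmod (f x) < \<epsilon>" using r by blast
qed

lemma normaliser_quasi_local_eq_partial_translation:
  assumes T: "bounded_op T" and N: "T \<in> normaliser linf_ops quasi_local"
  obtains f \<theta> D where "bounded (range f)" "bij_betw \<theta> D (\<theta> ` D)"
    "\<forall>\<epsilon>>0. \<exists>K>0. \<forall>x\<in>D. dist x (\<theta> x) > K \<longrightarrow> cmod (f x) < \<epsilon>"
    "T = mult_op f \<circ> partial_translation \<theta> D"
proof -
  obtain \<theta> D f where inj: "inj_on \<theta> D" and f: "bounded (range f)"
    and T_eq: "T = weighted_translation f \<theta> D"
    by (rule normaliser_linf_ops_eq_weighted_translation[OF T N])
  have "weighted_translation f \<theta> D \<in> quasi_local"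
    using N unfolding T_eq normaliser_def by blast
  then have "\<forall>\<epsilon>>0. \<exists>K>0. \<forall>x\<in>D. dist x (\<theta> x) > K \<longrightarrow> cmod (f x) < \<epsilon>"
    by (rule quasi_local_weighted_translation_decay)
  moreover have "T = mult_op f \<circ> partial_translation \<theta> D"
    unfolding T_eq mult_op_comp_partial_translation[OF inj] ..
  ultimately show ?thesis using that f inj_on_imp_bij_betw[OF inj] by blast
qed

theorem lemma6p2:
  fixes T :: "('a::metric_space \<Rightarrow> complex) \<Rightarrow> ('a \<Rightarrow> complex)"
  assumes "bounded_geometry TYPE('a)"
    and "bounded_op T"
  shows "(T \<in> normaliser linf_ops uniform_roe \<longleftrightarrow> T \<in> normaliser linf_ops quasi_local)
       \<and> (T \<in> normaliser linf_ops quasi_local \<longleftrightarrow>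
          (\<exists>f \<theta> D R. bounded (range f) \<and> bij_betw \<theta> D R \<and>
             (\<forall>\<epsilon>>0. \<exists>K>0. \<forall>x\<in>D. dist x (\<theta> x) > K \<longrightarrow> cmod (f x) < \<epsilon>) \<and>
             T = mult_op f \<circ> partial_translation \<theta> D))"
proof -
  have "T \<in> normaliser linf_ops uniform_roe" if
    "\<exists>f \<theta> D R. bounded (range f) \<and> bij_betw \<theta> D R \<and>
       (\<forall>\<epsilon>>0. \<exists>K>0. \<forall>x\<in>D. dist x (\<theta> x) > K \<longrightarrow> cmod (f x) < \<epsilon>) \<and>
       T = mult_op f \<circ> partial_translation \<theta> D"
    using that partial_translation_in_normaliser_uniform_roe by blast
  moreover have "\<exists>f \<theta> D R. bounded (range f) \<and> bij_betw \<theta> D R \<and>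
       (\<forall>\<epsilon>>0. \<exists>K>0. \<forall>x\<in>D. dist x (\<theta> x) > K \<longrightarrow> cmod (f x) < \<epsilon>) \<and>
       T = mult_op f \<circ> partial_translation \<theta> D"
    if "T \<in> normaliser linf_ops quasi_local"
    using normaliser_quasi_local_eq_partial_translation[OF assms(2) that] by metis
  moreover have "normaliser linf_ops uniform_roe \<subseteq> normaliser linf_ops quasi_local"
    by (rule normaliser_mono[OF uniform_roe_subset_quasi_local])
  ultimately show ?thesis by blast
qed

end
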